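(* Let $\mathbb{A},\mathbb{B}$ be real square matrices of the same size such that $\mathbb{A}$ is symmetric positive definite and $\mathbb{A}\mathbb{B}$ is skew-symmetric. Then every eigenvalue of $\mathbb{A}+\mathbb{B}$ is either a positive real number or a non-real complex number with positive real part. In particular, $\mathbb{A}+\mathbb{B}$ is invertible. *)

theory Defs
  imports "HOL-Analysis.Analysis"
begin

definition sym_pos_def_matrix :: "real^'n^'n \<Rightarrow> bool" where
  "sym_pos_def_matrix A \<longleftrightarrow> transpose A = A \<and> (\<forall>x. x \<noteq> 0 \<longrightarrow> x \<bullet> (A *v x) > 0)"

definition skew_symmetric_matrix :: "real^'n^'n \<Rightarrow> bool" where
  "skew_symmetric_matrix M \<longleftrightarrow> transpose M = - M"

definition complexify :: "real^'n^'m \<Rightarrow> complex^'n^'m" where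
  "complexify A = (\<chi> i j. complex_of_real (A $ i $ j))"

definition matrix_eigenvalue :: "real^'n^'n \<Rightarrow> complex \<Rightarrow> bool" where
  "matrix_eigenvalue A z \<longleftrightarrow> (\<exists>v::complex^'n. v \<noteq> 0 \<and> complexify A *v v = z *s v)"

end

theory Submission
  imports Defs
begin

text \<open>Let \<open>M = A + B\<close>. Skew-symmetry of \<open>A B\<close> makes the quadratic form of \<open>A M\<close> equal to
  \<open>x \<bullet> A M x = |A x|\<^sup>2\<close>. If \<open>x + i y\<close> is an eigenvector of \<open>M\<close> for \<open>a + i b\<close>, then summing this
  identity for \<open>x\<close> and \<open>y\<close> gives \<open>|A x|\<^sup>2 + |A y|\<^sup>2 = a (x \<bullet> A x + y \<bullet> A y)\<close>, the \<open>b\<close>-terms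
  cancelling by symmetry of \<open>A\<close>. By positive definiteness the left side is positive and the
  bracket nonnegative, so \<open>a > 0\<close>. A kernel vector of \<open>M\<close> would be such an eigenvector with \<open>a = 0\<close>.\<close>

lemma inner_symmetric_matrix_vector_mult:
  fixes A :: "real^'n^'n"
  assumes "transpose A = A"
  shows "x \<bullet> (A *v y) = (A *v x) \<bullet> y"
  by (metis assms dot_lmul_matrix transpose_matrix_vector)

lemma skew_symmetric_matrix_quadratic_form_zero:
  fixes M :: "real^'n^'n"
  assumes "skew_symmetric_matrix M"
  shows "x \<bullet> (M *v x) = 0"
proof -
  have "x \<bullet> (M *v x) = (transpose M *v x) \<bullet> x"
    by (simp add: dot_lmul_matrix)
  also have "\<dots> = - (x \<bullet> (M *v x))"
    using assms unfolding skew_symmetric_matrix_def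
    by (simp add: inner_commute matrix_vector_mult_def inner_vec_def sum_negf)
  finally show ?thesis by simp
qed

lemma quadratic_form_mult_add_skew_symmetric:
  fixes A B :: "real^'n^'n"
  assumes "transpose A = A" and "skew_symmetric_matrix (A ** B)"
  shows "x \<bullet> (A *v ((A + B) *v x)) = (A *v x) \<bullet> (A *v x)"
proof -
  have "A *v ((A + B) *v x) = A *v (A *v x) + (A ** B) *v x"
    by (simp add: matrix_vector_mul_assoc[symmetric] matrix_vector_mult_add_rdistrib
        matrix_vector_right_distrib)
  then have "x \<bullet> (A *v ((A + B) *v x)) = x \<bullet> (A *v (A *v x)) + x \<bullet> ((A ** B) *v x)"
    by (simp add: inner_add_right)
  also have "\<dots> = (A *v x) \<bullet> (A *v x)"
    using inner_symmetric_matrix_vector_mult[OF assms(1)]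
      skew_symmetric_matrix_quadratic_form_zero[OF assms(2)] by simp
  finally show ?thesis .
qed

lemma sym_pos_def_matrix_quadratic_form_nonneg:
  "sym_pos_def_matrix A \<Longrightarrow> 0 \<le> x \<bullet> (A *v x)"
  unfolding sym_pos_def_matrix_def by (cases "x = 0") (auto intro: less_imp_le)

lemma sym_pos_def_matrix_vector_mult_nonzero:
  "sym_pos_def_matrix A \<Longrightarrow> x \<noteq> 0 \<Longrightarrow> A *v x \<noteq> 0"
  unfolding sym_pos_def_matrix_def by fastforce

lemma real_eigenpair_Re_pos:
  fixes A B :: "real^'n^'n" and x y :: "real^'n"
  assumes A: "sym_pos_def_matrix A" and AB: "skew_symmetric_matrix (A ** B)"
    and hx: "(A + B) *v x = a *\<^sub>R x - b *\<^sub>R y"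
    and hy: "(A + B) *v y = b *\<^sub>R x + a *\<^sub>R y"
    and nz: "x \<noteq> 0 \<or> y \<noteq> 0"
  shows "a > 0"
proof -
  have At: "transpose A = A"
    using A unfolding sym_pos_def_matrix_def by simp
  have "(A *v x) \<bullet> (A *v x) + (A *v y) \<bullet> (A *v y)
        = x \<bullet> (A *v ((A + B) *v x)) + y \<bullet> (A *v ((A + B) *v y))"
    by (simp add: quadratic_form_mult_add_skew_symmetric[OF At AB])
  also have "\<dots> = a * (x \<bullet> (A *v x) + y \<bullet> (A *v y))"
    unfolding hx hy
    using inner_symmetric_matrix_vector_mult[OF At, of x y] inner_commute[of "A *v x" y]
    by (simp add: matrix_vector_mult_diff_distrib matrix_vector_right_distrib
        matrix_vector_mult_scaleR inner_diff_right inner_add_right algebra_simps)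
  finally have eq: "(A *v x) \<bullet> (A *v x) + (A *v y) \<bullet> (A *v y)
                    = a * (x \<bullet> (A *v x) + y \<bullet> (A *v y))" .
  have "A *v x \<noteq> 0 \<or> A *v y \<noteq> 0"
    using nz sym_pos_def_matrix_vector_mult_nonzero[OF A] by blast
  then have "0 < (A *v x) \<bullet> (A *v x) + (A *v y) \<bullet> (A *v y)"
    by (auto intro: add_pos_nonneg add_nonneg_pos)
  moreover have "0 \<le> x \<bullet> (A *v x) + y \<bullet> (A *v y)"
    using sym_pos_def_matrix_quadratic_form_nonneg[OF A] by (simp add: add_nonneg_nonneg)
  ultimately show ?thesis
    using eq by (simp add: zero_less_mult_iff)
qed

lemma matrix_eigenvalue_real_eigenpair:
  fixes M :: "real^'n^'n"
  assumes "matrix_eigenvalue M z"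
  obtains x y :: "real^'n"
  where "x \<noteq> 0 \<or> y \<noteq> 0"
    and "M *v x = Re z *\<^sub>R x - Im z *\<^sub>R y"
    and "M *v y = Im z *\<^sub>R x + Re z *\<^sub>R y"
proof -
  obtain v :: "complex^'n" where "v \<noteq> 0" and ev: "complexify M *v v = z *s v"
    using assms unfolding matrix_eigenvalue_def by blast
  define x where "x = (\<chi> i. Re (v $ i))"
  define y where "y = (\<chi> i. Im (v $ i))"
  have comp: "(complexify M *v v) $ i = Complex ((M *v x) $ i) ((M *v y) $ i)" for i
    unfolding complexify_def matrix_vector_mult_def x_def y_def
    by (simp add: complex_eq_iff Re_sum Im_sum)
  have "M *v x = Re z *\<^sub>R x - Im z *\<^sub>R y" "M *v y = Im z *\<^sub>R x + Re z *\<^sub>R y"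
    using arg_cong[OF ev, of "\<lambda>w. Re (w $ _)"] arg_cong[OF ev, of "\<lambda>w. Im (w $ _)"]
    by (auto simp: vec_eq_iff comp x_def y_def)
  moreover have "x \<noteq> 0 \<or> y \<noteq> 0"
    using \<open>v \<noteq> 0\<close> by (auto simp: x_def y_def vec_eq_iff complex_eq_iff)
  ultimately show thesis
    using that by blast
qed

theorem lemma4p1:
  fixes A B :: "real^'n^'n"
  assumes "sym_pos_def_matrix A"
    and "skew_symmetric_matrix (A ** B)"
  shows "(\<forall>z::complex. matrix_eigenvalue (A + B) z \<longrightarrow>
            ((Im z = 0 \<and> Re z > 0) \<or> (Im z \<noteq> 0 \<and> Re z > 0)))
         \<and> invertible (A + B)"
proof
  show "\<forall>z::complex. matrix_eigenvalue (A + B) z \<longrightarrow>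
          ((Im z = 0 \<and> Re z > 0) \<or> (Im z \<noteq> 0 \<and> Re z > 0))"
    using matrix_eigenvalue_real_eigenpair real_eigenpair_Re_pos[OF assms] by metis
  have "x = 0" if "(A + B) *v x = 0" for x
    using real_eigenpair_Re_pos[OF assms, of x 0 0 0] that by auto
  then show "invertible (A + B)"
    unfolding invertible_left_inverse matrix_left_invertible_ker by blast
qed

end
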